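(* Let $g(x)=F_2(x,x,x)$ for $x\ge0$ and $q(x)=x+\frac{f(x)}{f'(x)}$. If $g$ has no $2$-cycle (no $x\ne y$ in $[0,\infty)$ with $g(x)=y$, $g(y)=x$) and $q(x)>-\frac{h}{b}\left(1+\frac1b\right)$ for all $x\ge0$, then the unique positive equilibrium $\bar x$ of $x_{n+1}=x_nf(x_{n-2})+h$ is globally attracting: every solution with initial values $x_{-2},x_{-1},x_0\ge0$ converges to $\bar x$.
   Context: Let $h>0$ and $f:[0,\infty)\to(0,\infty)$ be differentiable with $f'(x)<0$ for all $x\ge 0$, $\lim_{t\to\infty}tf(t)=0$, and $b:=f(0)$ (so $f\le b$). $F_2(x,y,z)=xf(x)f(y)f(z)+hf(x)f(y)+hf(x)+h$ is the twice-expanded map of $F_0(x,y,z)=xf(z)+h$, and $\bar x$ is the unique solution in $[0,\infty)$ of $x=xf(x)+h$. *)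

theory Defs
  imports Complex_Main
begin

text \<open>Twice-expanded map of F0(x,y,z) = x f(z) + h.\<close>
definition F2 :: "(real \<Rightarrow> real) \<Rightarrow> real \<Rightarrow> real \<Rightarrow> real \<Rightarrow> real \<Rightarrow> real" where
  "F2 f h x y z = x * f x * f y * f z + h * f x * f y + h * f x + h"

definition gmap :: "(real \<Rightarrow> real) \<Rightarrow> real \<Rightarrow> real \<Rightarrow> real" where
  "gmap f h x = F2 f h x x x"

definition qmap :: "(real \<Rightarrow> real) \<Rightarrow> (real \<Rightarrow> real) \<Rightarrow> real \<Rightarrow> real" where
  "qmap f f' x = x + f x / f' x"

end

theory Submission imports Defs begin

text \<open>
  Under the bound on \<open>q\<close>, \<open>F\<^sub>2\<close> is nonincreasing in each of its three arguments, hence so is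
  \<open>g\<close>. If eventually \<open>L \<le> x\<^sub>n \<le> U\<close>, then eventually \<open>g U \<le> x\<^sub>n \<le> g L\<close>, because \<open>x\<^sub>n\<^sub>+\<^sub>5\<close> is
  \<open>F\<^sub>2\<close> of three earlier terms. Starting from \<open>[0, g 0]\<close> this yields nested intervals
  \<open>[L\<^sub>k, U\<^sub>k]\<close> with \<open>L\<^sub>k\<^sub>+\<^sub>1 = g U\<^sub>k\<close>, \<open>U\<^sub>k\<^sub>+\<^sub>1 = g L\<^sub>k\<close>, all containing \<open>x\<close> eventually and all
  containing \<open>x\<close>-bar. Their limits \<open>A \<le> B\<close> satisfy \<open>g A = B\<close>, \<open>g B = A\<close>, so \<open>A = B\<close> for lack
  of 2-cycles, and \<open>x\<^sub>n\<close> is squeezed to \<open>x\<close>-bar.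
\<close>

lemma DERIV_nonpos_imp_antitone_nonneg:
  fixes \<phi> \<phi>' :: "real \<Rightarrow> real"
  assumes deriv: "\<And>t. t \<ge> 0 \<Longrightarrow> (\<phi> has_real_derivative \<phi>' t) (at t within {0..})"
    and nonpos: "\<And>t. t \<ge> 0 \<Longrightarrow> \<phi>' t \<le> 0"
    and "0 \<le> a" "a \<le> b"
  shows "\<phi> b \<le> \<phi> a"
proof (rule DERIV_nonpos_imp_decreasing_open[OF \<open>a \<le> b\<close>])
  fix t assume "a < t" "t < b"
  then have "t > 0" using \<open>0 \<le> a\<close> by auto
  have "(\<phi> has_real_derivative \<phi>' t) (at t within {0<..})"
    by (rule has_field_derivative_subset[OF deriv]) (use \<open>t > 0\<close> in auto)
  then have "(\<phi> has_real_derivative \<phi>' t) (at t)"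
    using at_within_open[of t "{0<..}"] \<open>t > 0\<close> by auto
  then show "\<exists>y. (\<phi> has_real_derivative y) (at t) \<and> y \<le> 0"
    using nonpos \<open>t > 0\<close> by auto
next
  show "continuous_on {a..b} \<phi>"
    by (rule DERIV_continuous_on[of _ _ \<phi>'], rule has_field_derivative_subset[OF deriv])
      (use assms in auto)
qed

section \<open>Antitone self-maps of the half-line\<close>

locale antitone_selfmap =
  fixes g :: "real \<Rightarrow> real"
  assumes antitone: "0 \<le> u \<Longrightarrow> u \<le> v \<Longrightarrow> g v \<le> g u"
    and nonneg: "0 \<le> u \<Longrightarrow> 0 \<le> g u"
    and continuous: "continuous_on {0..} g"
begin

fun lo :: "nat \<Rightarrow> real" and hi :: "nat \<Rightarrow> real" where
  "lo 0 = 0"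
| "lo (Suc k) = g (hi k)"
| "hi 0 = g 0"
| "hi (Suc k) = g (lo k)"

lemma brackets_nested: "0 \<le> lo k \<and> lo k \<le> lo (Suc k) \<and> lo (Suc k) \<le> hi (Suc k) \<and> hi (Suc k) \<le> hi k"
proof (induction k)
  case 0
  have "0 \<le> g 0" by (rule nonneg) simp
  then show ?case using antitone[of 0 "g 0"] nonneg by simp
next
  case (Suc k)
  then show ?case using antitone by simp
qed

lemma lo_le_hi: "lo k \<le> hi k"
  using brackets_nested[of k] by (cases k) (auto simp del: lo.simps hi.simps)

lemma lo_nonneg: "0 \<le> lo k"
  using brackets_nested by blast

lemma incseq_lo: "incseq lo"
  using brackets_nested by (intro incseq_SucI) blast

lemma decseq_hi: "decseq hi"
  using brackets_nested by (intro decseq_SucI) blast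

lemma fixed_point_in_brackets:
  assumes "0 \<le> p" "g p = p"
  shows "lo k \<le> p \<and> p \<le> hi k"
proof (induction k)
  case 0
  then show ?case using antitone[of 0 p] assms by simp
next
  case (Suc k)
  then show ?case using antitone[of p "hi k"] antitone[of "lo k" p] assms lo_nonneg by simp
qed

lemma brackets_limits:
  obtains A B where "lo \<longlonglongrightarrow> A" "hi \<longlonglongrightarrow> B" "0 \<le> A" "A \<le> B" "g A = B" "g B = A"
proof -
  define A B where "A = (SUP k. lo k)" and "B = (INF k. hi k)"
  have hi_nonneg: "0 \<le> hi k" for k
    using lo_nonneg[of k] lo_le_hi[of k] by linarith
  have "lo k \<le> hi 0" for k
    using lo_le_hi[of k] decseqD[OF decseq_hi, of 0 k] by simp
  then have "bdd_above (range lo)" by (intro bdd_aboveI[of _ "hi 0"]) auto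
  then have lo_lim: "lo \<longlonglongrightarrow> A"
    unfolding A_def by (rule LIMSEQ_incseq_SUP[OF _ incseq_lo])
  have "bdd_below (range hi)" using hi_nonneg by (intro bdd_belowI[of _ 0]) auto
  then have hi_lim: "hi \<longlonglongrightarrow> B"
    unfolding B_def by (rule LIMSEQ_decseq_INF[OF _ decseq_hi])
  have "0 \<le> A" by (rule LIMSEQ_le_const[OF lo_lim]) (use lo_nonneg in auto)
  have "A \<le> B" by (rule LIMSEQ_le[OF lo_lim hi_lim]) (use lo_le_hi in auto)
  have "(\<lambda>k. g (lo k)) \<longlonglongrightarrow> g A"
    by (rule continuous_on_tendsto_compose[OF continuous lo_lim]) (use \<open>0 \<le> A\<close> lo_nonneg in auto)
  moreover have "(\<lambda>k. g (lo k)) \<longlonglongrightarrow> B"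
    using LIMSEQ_Suc[OF hi_lim] by simp
  ultimately have "g A = B" by (rule LIMSEQ_unique)
  have "(\<lambda>k. g (hi k)) \<longlonglongrightarrow> g B"
    by (rule continuous_on_tendsto_compose[OF continuous hi_lim])
      (use \<open>0 \<le> A\<close> \<open>A \<le> B\<close> hi_nonneg in auto)
  moreover have "(\<lambda>k. g (hi k)) \<longlonglongrightarrow> A"
    using LIMSEQ_Suc[OF lo_lim] by simp
  ultimately have "g B = A" by (rule LIMSEQ_unique)
  show ?thesis
    by (rule that[OF lo_lim hi_lim \<open>0 \<le> A\<close> \<open>A \<le> B\<close> \<open>g A = B\<close> \<open>g B = A\<close>])
qed

lemma brackets_tendsto_fixed_point:
  assumes no_2cycle: "\<And>u v. 0 \<le> u \<Longrightarrow> 0 \<le> v \<Longrightarrow> g u = v \<Longrightarrow> g v = u \<Longrightarrow> u = v"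
    and "0 \<le> p" "g p = p"
  shows "lo \<longlonglongrightarrow> p" "hi \<longlonglongrightarrow> p"
proof -
  obtain A B where lim: "lo \<longlonglongrightarrow> A" "hi \<longlonglongrightarrow> B" and "0 \<le> A" "A \<le> B" "g A = B" "g B = A"
    by (rule brackets_limits)
  then have "A = B" by (intro no_2cycle[of A B]) auto
  note bracket = fixed_point_in_brackets[OF \<open>0 \<le> p\<close> \<open>g p = p\<close>]
  have "A \<le> p" by (rule LIMSEQ_le_const2[OF lim(1)]) (use bracket in auto)
  moreover have "p \<le> B" by (rule LIMSEQ_le_const[OF lim(2)]) (use bracket in auto)
  ultimately have "A = p" "B = p" using \<open>A = B\<close> by linarith+
  with lim show "lo \<longlonglongrightarrow> p" "hi \<longlonglongrightarrow> p" by simp_all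
qed

theorem trapped_sequence_tendsto_fixed_point:
  fixes x :: "nat \<Rightarrow> real"
  assumes no_2cycle: "\<And>u v. 0 \<le> u \<Longrightarrow> 0 \<le> v \<Longrightarrow> g u = v \<Longrightarrow> g v = u \<Longrightarrow> u = v"
    and fixed: "0 \<le> p" "g p = p"
    and x_nonneg: "\<And>n. 0 \<le> x n"
    and upper_step: "\<And>L. 0 \<le> L \<Longrightarrow> eventually (\<lambda>n. L \<le> x n) sequentially
                                \<Longrightarrow> eventually (\<lambda>n. x n \<le> g L) sequentially"
    and lower_step: "\<And>U. eventually (\<lambda>n. x n \<le> U) sequentially
                                \<Longrightarrow> eventually (\<lambda>n. g U \<le> x n) sequentially"
  shows "x \<longlonglongrightarrow> p"
proof -
  have trapped: "eventually (\<lambda>n. lo k \<le> x n \<and> x n \<le> hi k) sequentially" for k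
  proof (induction k)
    case 0
    have "eventually (\<lambda>n. x n \<le> g 0) sequentially"
      by (rule upper_step) (simp_all add: x_nonneg)
    then show ?case by (simp add: x_nonneg)
  next
    case (Suc k)
    have lower: "eventually (\<lambda>n. lo k \<le> x n) sequentially"
      and upper: "eventually (\<lambda>n. x n \<le> hi k) sequentially"
      using Suc by (rule eventually_mono; simp)+
    have "eventually (\<lambda>n. x n \<le> g (lo k) \<and> g (hi k) \<le> x n) sequentially"
      by (rule eventually_conj[OF upper_step[OF lo_nonneg lower] lower_step[OF upper]])
    then show ?case by (simp add: conj_commute)
  qed
  have lims: "lo \<longlonglongrightarrow> p" "hi \<longlonglongrightarrow> p"
    by (rule brackets_tendsto_fixed_point[OF _ fixed], rule no_2cycle, assumption+)+
  show ?thesis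
  proof (rule order_tendstoI)
    fix a assume "a < p"
    obtain k where "a < lo k"
      using order_tendstoD(1)[OF lims(1) \<open>a < p\<close>]
      by (metis eventually_sequentially order_refl)
    show "eventually (\<lambda>n. a < x n) sequentially"
      using trapped[of k] by (rule eventually_mono) (use \<open>a < lo k\<close> in auto)
  next
    fix a assume "p < a"
    obtain k where "hi k < a"
      using order_tendstoD(2)[OF lims(2) \<open>p < a\<close>]
      by (metis eventually_sequentially order_refl)
    show "eventually (\<lambda>n. x n < a) sequentially"
      using trapped[of k] by (rule eventually_mono) (use \<open>hi k < a\<close> in auto)
  qed
qed

end

section \<open>Monotonicity of the expanded map\<close>

locale delay_model =
  fixes f f' :: "real \<Rightarrow> real" and h b :: real
  assumes h_pos: "h > 0"
    and f_pos: "\<And>t. t \<ge> 0 \<Longrightarrow> f t > 0"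
    and f_deriv: "\<And>t. t \<ge> 0 \<Longrightarrow> (f has_real_derivative f' t) (at t within {0..})"
    and f'_neg: "\<And>t. t \<ge> 0 \<Longrightarrow> f' t < 0"
    and b_def: "b = f 0"
    and q_bound: "\<And>t. t \<ge> 0 \<Longrightarrow> qmap f f' t > - (h / b) * (1 + 1 / b)"
begin

lemma f_antitone: "0 \<le> s \<Longrightarrow> s \<le> t \<Longrightarrow> f t \<le> f s"
  using f_deriv f'_neg by (intro DERIV_nonpos_imp_antitone_nonneg[of f f']) (auto intro: less_imp_le)

lemma f_le_b: "0 \<le> t \<Longrightarrow> f t \<le> b"
  using f_antitone[of 0 t] b_def by simp

lemma b_pos: "b > 0"
  using f_pos[of 0] b_def by simp

lemma qmap_weighted_pos:
  assumes "0 \<le> s" "0 \<le> y" "0 \<le> z"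
  shows "qmap f f' s * (f y * f z) + h * (f y + 1) > 0"
proof (cases "qmap f f' s \<ge> 0")
  case True
  have "0 < f y" "0 < f z" using f_pos assms by auto
  then have "0 \<le> qmap f f' s * (f y * f z)" "0 < h * (f y + 1)"
    using True h_pos by simp_all
  then show ?thesis by linarith
next
  case False
  let ?q = "qmap f f' s"
  have fy: "0 < f y" "f y \<le> b" and fz: "0 < f z" "f z \<le> b"
    using f_pos f_le_b assms by auto
  \<comment> \<open>for negative \<open>q\<close> the worst case is \<open>f z = b\<close>; the bound on \<open>q\<close> is sharp for \<open>f y = b\<close>\<close>
  have "?q * b * f y \<le> ?q * (f y * f z)"
    using False fy fz by (simp add: mult.commute mult.left_commute mult_left_mono_neg)
  moreover have "?q * b > - h * (1 + 1 / b)"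
    using q_bound[OF \<open>0 \<le> s\<close>] b_pos by (simp add: field_simps)
  then have "?q * b * f y > - h * f y - h * (f y / b)"
    using mult_strict_right_mono[OF _ \<open>0 < f y\<close>] by (fastforce simp: algebra_simps)
  moreover have "h * (f y / b) \<le> h * 1"
    using fy b_pos h_pos by (intro mult_left_mono) auto
  ultimately show ?thesis by (simp add: algebra_simps)
qed

lemma F2_antitone_fst:
  assumes "0 \<le> a" "a \<le> a'" "0 \<le> y" "0 \<le> z"
  shows "F2 f h a' y z \<le> F2 f h a y z"
proof -
  let ?F = "\<lambda>s. s * f s * (f y * f z) + h * f s * f y + h * f s + h"
  let ?F' = "\<lambda>s. f' s * (qmap f f' s * (f y * f z) + h * (f y + 1))"
  have "(?F has_real_derivative ?F' s) (at s within {0..})" if "s \<ge> 0" for s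
  proof -
    have "f' s \<noteq> 0" using f'_neg that by fastforce
    then have "?F' s = (f s + s * f' s) * (f y * f z) + h * f' s * f y + h * f' s"
      by (simp add: qmap_def field_simps)
    then show ?thesis
      by (simp only:) (rule derivative_eq_intros refl f_deriv[OF that] | simp)+
  qed
  moreover have "?F' s \<le> 0" if "s \<ge> 0" for s
    using f'_neg[OF that] qmap_weighted_pos[OF that \<open>0 \<le> y\<close> \<open>0 \<le> z\<close>]
    by (simp add: mult_nonpos_nonneg)
  ultimately have "?F a' \<le> ?F a"
    using assms by (intro DERIV_nonpos_imp_antitone_nonneg[of ?F ?F'])
  then show ?thesis unfolding F2_def by (simp add: mult.assoc)
qed

lemma F2_antitone_snd:
  assumes "0 \<le> a" "0 \<le> y" "y \<le> y'" "0 \<le> z"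
  shows "F2 f h a y' z \<le> F2 f h a y z"
proof -
  have "f y' * (a * f a * f z + h * f a) \<le> f y * (a * f a * f z + h * f a)"
    using f_antitone f_pos[of a] f_pos[of z] assms h_pos by (intro mult_right_mono) auto
  then show ?thesis by (simp add: F2_def algebra_simps)
qed

lemma F2_antitone_thd:
  assumes "0 \<le> a" "0 \<le> y" "0 \<le> z" "z \<le> z'"
  shows "F2 f h a y z' \<le> F2 f h a y z"
proof -
  have "f z' * (a * f a * f y) \<le> f z * (a * f a * f y)"
    using f_antitone f_pos[of a] f_pos[of y] assms by (intro mult_right_mono) auto
  then show ?thesis by (simp add: F2_def algebra_simps)
qed

lemma F2_antitone:
  assumes "0 \<le> a" "a \<le> a'" "0 \<le> y" "y \<le> y'" "0 \<le> z" "z \<le> z'"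
  shows "F2 f h a' y' z' \<le> F2 f h a y z"
proof -
  have "F2 f h a' y' z' \<le> F2 f h a y' z'" using F2_antitone_fst assms by simp
  also have "\<dots> \<le> F2 f h a y z'" using F2_antitone_snd assms by simp
  also have "\<dots> \<le> F2 f h a y z" using F2_antitone_thd assms by simp
  finally show ?thesis .
qed

lemma F2_le_gmap:
  "0 \<le> L \<Longrightarrow> L \<le> a \<Longrightarrow> L \<le> y \<Longrightarrow> L \<le> z \<Longrightarrow> F2 f h a y z \<le> gmap f h L"
  unfolding gmap_def by (rule F2_antitone) auto

lemma gmap_le_F2:
  "0 \<le> a \<Longrightarrow> 0 \<le> y \<Longrightarrow> 0 \<le> z \<Longrightarrow> a \<le> U \<Longrightarrow> y \<le> U \<Longrightarrow> z \<le> U \<Longrightarrow> gmap f h U \<le> F2 f h a y z"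
  unfolding gmap_def by (rule F2_antitone) auto

sublocale gmap: antitone_selfmap "gmap f h"
proof
  show "0 \<le> u \<Longrightarrow> u \<le> v \<Longrightarrow> gmap f h v \<le> gmap f h u" for u v
    using F2_le_gmap[of u v v v] by (simp add: gmap_def)
  show "0 \<le> u \<Longrightarrow> 0 \<le> gmap f h u" for u
    using f_pos[of u] h_pos by (simp add: gmap_def F2_def)
  have "continuous_on {0..} f"
    using f_deriv by (intro DERIV_continuous_on[of _ _ f']) auto
  then show "continuous_on {0..} (gmap f h)"
    unfolding gmap_def F2_def by (intro continuous_intros)
qed

end

section \<open>Solutions of the delay equation\<close>

locale delay_solution = delay_model +
  fixes x :: "nat \<Rightarrow> real"
  assumes init: "x 0 \<ge> 0" "x 1 \<ge> 0" "x 2 \<ge> 0"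
    and recur: "\<And>n. x (n + 3) = x (n + 2) * f (x n) + h"
begin

lemma x_nonneg: "0 \<le> x n"
proof (induction n rule: less_induct)
  case (less n)
  show ?case
  proof (cases "n < 3")
    case True
    then have "n = 0 \<or> n = 1 \<or> n = 2" by auto
    then show ?thesis using init by auto
  next
    case False
    then obtain m where "n = m + 3" by (metis add.commute le_add_diff_inverse not_less)
    then show ?thesis using less[of m] less[of "m + 2"] f_pos[of "x m"] h_pos recur[of m] by simp
  qed
qed

lemma x_expanded: "x (n + 5) = F2 f h (x (n + 2)) (x (n + 1)) (x n)"
  using recur[of n] recur[of "n + 1"] recur[of "n + 2"]
  by (simp add: F2_def algebra_simps numeral_eq_Suc)

lemma eventually_upper_step:
  assumes "0 \<le> L" "eventually (\<lambda>n. L \<le> x n) sequentially"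
  shows "eventually (\<lambda>n. x n \<le> gmap f h L) sequentially"
proof -
  obtain N where "\<And>n. n \<ge> N \<Longrightarrow> L \<le> x n" using assms(2) by (auto simp: eventually_sequentially)
  then have "x n \<le> gmap f h L" if "n \<ge> N + 5" for n
    using x_expanded[of "n - 5"] F2_le_gmap[OF \<open>0 \<le> L\<close>] that by simp
  then show ?thesis by (auto simp: eventually_sequentially)
qed

lemma eventually_lower_step:
  assumes "eventually (\<lambda>n. x n \<le> U) sequentially"
  shows "eventually (\<lambda>n. gmap f h U \<le> x n) sequentially"
proof -
  obtain N where "\<And>n. n \<ge> N \<Longrightarrow> x n \<le> U" using assms by (auto simp: eventually_sequentially)
  then have "gmap f h U \<le> x n" if "n \<ge> N + 5" for n
    using x_expanded[of "n - 5"] gmap_le_F2 x_nonneg that by simp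
  then show ?thesis by (auto simp: eventually_sequentially)
qed

end

text \<open>The hypothesis \<open>f_lim\<close> only serves to guarantee that \<open>x\<close>-bar exists; here it is given.\<close>

theorem mainTheorem13:
  fixes f f' :: "real \<Rightarrow> real" and h b xbar :: real and x :: "nat \<Rightarrow> real"
  assumes h_pos: "h > 0"
    and f_pos: "\<And>t. t \<ge> 0 \<Longrightarrow> f t > 0"
    and f_deriv: "\<And>t. t \<ge> 0 \<Longrightarrow> (f has_real_derivative f' t) (at t within {0..})"
    and f'_neg: "\<And>t. t \<ge> 0 \<Longrightarrow> f' t < 0"
    and f_lim: "((\<lambda>t. t * f t) \<longlongrightarrow> 0) at_top"
    and b_def: "b = f 0"
    and xbar_nonneg: "xbar \<ge> 0"
    and xbar_eq: "xbar = xbar * f xbar + h"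
    and no_2cycle: "\<not> (\<exists>u v. u \<ge> 0 \<and> v \<ge> 0 \<and> u \<noteq> v \<and> gmap f h u = v \<and> gmap f h v = u)"
    and q_bound: "\<And>t. t \<ge> 0 \<Longrightarrow> qmap f f' t > - (h / b) * (1 + 1 / b)"
    and init: "x 0 \<ge> 0" "x 1 \<ge> 0" "x 2 \<ge> 0"
    and recur: "\<And>n. x (n + 3) = x (n + 2) * f (x n) + h"
  shows "x \<longlonglongrightarrow> xbar"
proof -
  interpret delay_solution f f' h b x
    using assms by unfold_locales auto
  have "gmap f h xbar = ((xbar * f xbar + h) * f xbar + h) * f xbar + h"
    by (simp add: gmap_def F2_def algebra_simps)
  then have "gmap f h xbar = xbar"
    using xbar_eq by simp
  then show ?thesis
    using gmap.trapped_sequence_tendsto_fixed_point[OF _ xbar_nonneg _ x_nonneg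
        eventually_upper_step eventually_lower_step] no_2cycle
    by blast
qed

end
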